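(* Let $\mathcal X$ be a barreled topological real vector space, $\sigma$ a symplectic form on $\mathcal X$, $\mathcal X_{\rm bulk}\subset\mathcal X$ a linear subspace, $\mathcal X_{\rm bd}$ a topological real vector space, and $\partial:\mathcal X_{\rm bulk}'\to\mathcal X_{\rm bd}'$ a linear map whose restriction to $\mathcal X'$ is continuous $\mathcal X'\to\mathcal X_{\rm bd}'$. Let $\eta$ be a strictly positive symmetric bilinear form on $\mathcal X$ with $|v_1\cdot\sigma v_2|\le (v_1\cdot\eta v_1)^{1/2}(v_2\cdot\eta v_2)^{1/2}$, such that $\eta:\mathcal X\to\mathcal X'$ is continuous, and such that for every $u\in\mathcal X'$, $\partial u=0$ implies that $u$ vanishes on $\mathcal X_{\rm bulk}$. With $\mathcal X^{\rm cpl},\sigma^{\rm cpl},\mathfrak A_{\rm bulk}=\mathrm{CCR}(\mathcal X_{\rm bulk}^{\rm cl},\sigma^{\rm cpl})$ and $\mathfrak A_{\rm bd}=\mathrm{CCR}\big((\{\partial'f:f\in\mathcal X_{\rm bd}\})^{\rm cl},\sigma^{\rm cpl}\big)$ as in the context, let $\pi$ be any representation of $\mathrm{CCR}(\mathcal X^{\rm cpl},\sigma^{\rm cpl})$ on a Hilbert space (not necessarily related to $\eta$). Then 1. $\pi(\mathfrak A_{\rm bulk})\subset\pi(\mathfrak A_{\rm bd})$ and $\pi(\mathfrak A_{\rm bulk})''\subset\pi(\mathfrak A_{\rm bd})''$ (double commutants); 2. every vector which is cyclic for $\pi(\mathfrak A_{\rm bulk})$ is also cyclic for $\pi(\mathfrak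 A_{\rm bd})$.
   Context: Duals carry the weak$^*$ topology. $\mathcal X^{\rm cpl}$ is the real Hilbert space completion of $\mathcal X$ with respect to the inner product $\eta$, with extended inner product $\eta^{\rm cpl}$, and $\sigma^{\rm cpl}$ is the continuous extension of $\sigma$; closures are in $\mathcal X^{\rm cpl}$. For $\tilde u\in\mathcal X^{\rm cpl}$, $\eta^{\rm cpl}\tilde u\in\mathcal X'$ is $v\mapsto(v\cdot\eta^{\rm cpl}\tilde u)$, and for $f\in\mathcal X_{\rm bd}$, $\partial'f\in\mathcal X^{\rm cpl}$ is the unique element with $(\partial'f\cdot\eta^{\rm cpl}\tilde u)=(\partial(\eta^{\rm cpl}\tilde u))(f)$ for all $\tilde u$. $\mathrm{CCR}(\mathcal Y,\sigma)$ denotes the Weyl CCR $C^*$-algebra generated by $W(v)$, $v\in\mathcal Y$, with $W(v_1)W(v_2)=e^{-\frac i2 v_1\cdot\sigma v_2}W(v_1+v_2)$, $W(v)^*=W(-v)$, $W(0)=1$; for a subspace it means the generated $C^*$-subalgebra. *)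

theory Defs
  imports "HOL-Analysis.Analysis"
begin

definition tvs :: "'a::{real_vector,topological_space} itself \<Rightarrow> bool" where
  "tvs _ \<longleftrightarrow>
     continuous_on UNIV (\<lambda>p::'a \<times> 'a. fst p + snd p) \<and>
     continuous_on UNIV (\<lambda>p::real \<times> 'a. fst p *\<^sub>R snd p)"

definition barrel :: "'a::{real_vector,topological_space} set \<Rightarrow> bool" where
  "barrel B \<longleftrightarrow> closed B \<and> convex B \<and>
     (\<forall>x\<in>B. \<forall>c::real. \<bar>c\<bar> \<le> 1 \<longrightarrow> c *\<^sub>R x \<in> B) \<and>
     (\<forall>x. \<exists>r>0. \<forall>c::real. \<bar>c\<bar> \<le> r \<longrightarrow> c *\<^sub>R x \<in> B)"

definition barreled :: "'a::{real_vector,topological_space} itself \<Rightarrow> bool" where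
  "barreled T \<longleftrightarrow> tvs T \<and>
     (\<forall>B::'a set. barrel B \<longrightarrow> (\<exists>U. open U \<and> 0 \<in> U \<and> U \<subseteq> B))"

text \<open>Continuous linear functionals on a linear subspace S (subspace topology),
  normalised to vanish outside S.  cdual UNIV is the topological dual.\<close>
definition cdual :: "'a::{real_vector,topological_space} set \<Rightarrow> ('a \<Rightarrow> real) set" where
  "cdual S = {u. (\<forall>x\<in>S. \<forall>y\<in>S. \<forall>a b. u (a *\<^sub>R x + b *\<^sub>R y) = a * u x + b * u y) \<and>
                 continuous_on S u \<and> (\<forall>x. x \<notin> S \<longrightarrow> u x = 0)}"

definition weak_star :: "('a \<Rightarrow> real) set \<Rightarrow> ('a \<Rightarrow> real) topology" where
  "weak_star D = subtopology (product_topology (\<lambda>_. euclideanreal) UNIV) D"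

definition restr :: "'a set \<Rightarrow> ('a \<Rightarrow> real) \<Rightarrow> ('a \<Rightarrow> real)" where
  "restr S u = (\<lambda>x. if x \<in> S then u x else 0)"

definition symplectic_form :: "('a::real_vector \<Rightarrow> 'a \<Rightarrow> real) \<Rightarrow> bool" where
  "symplectic_form \<sigma> \<longleftrightarrow>
     (\<forall>w. linear (\<lambda>v. \<sigma> v w)) \<and> (\<forall>v. linear (\<sigma> v)) \<and>
     (\<forall>v w. \<sigma> v w = - \<sigma> w v) \<and>
     (\<forall>v. (\<forall>w. \<sigma> v w = 0) \<longrightarrow> v = 0)"

definition strictly_pos_sym_form :: "('a::real_vector \<Rightarrow> 'a \<Rightarrow> real) \<Rightarrow> bool" where
  "strictly_pos_sym_form \<eta> \<longleftrightarrow>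
     (\<forall>w. linear (\<lambda>v. \<eta> v w)) \<and> (\<forall>v. linear (\<eta> v)) \<and>
     (\<forall>v w. \<eta> v w = \<eta> w v) \<and> (\<forall>v. v \<noteq> 0 \<longrightarrow> \<eta> v v > 0)"

definition is_completion :: "('a::real_vector \<Rightarrow> 'a \<Rightarrow> real) \<Rightarrow> ('a \<Rightarrow> 'h::{real_inner,complete_space}) \<Rightarrow> bool" where
  "is_completion \<eta> j \<longleftrightarrow> linear j \<and> (\<forall>v w. \<eta> v w = inner (j v) (j w)) \<and> closure (range j) = UNIV"

text \<open>\<partial>'f \<in> X^cpl, characterised by (\<partial>'f . \<eta>^cpl u) = (\<partial>(\<eta>^cpl u))(f)\<close>
definition bdry_dual ::
  "('a \<Rightarrow> 'h::real_inner) \<Rightarrow> 'a set \<Rightarrow> (('a \<Rightarrow> real) \<Rightarrow> ('b \<Rightarrow> real)) \<Rightarrow> 'b \<Rightarrow> 'h" where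
  "bdry_dual j Xb bd f = (THE p. \<forall>u. inner p u = bd (restr Xb (\<lambda>v. inner (j v) u)) f)"

definition complex_structure :: "('k::real_inner \<Rightarrow>\<^sub>L 'k) \<Rightarrow> bool" where
  "complex_structure J \<longleftrightarrow> (\<forall>x. J (J x) = - x) \<and> (\<forall>x y. inner (J x) (J y) = inner x y)"

definition cops :: "('k::real_inner \<Rightarrow>\<^sub>L 'k) \<Rightarrow> ('k \<Rightarrow>\<^sub>L 'k) set" where
  "cops J = {T. T o\<^sub>L J = J o\<^sub>L T}"

definition is_adjoint :: "('k::real_inner \<Rightarrow>\<^sub>L 'k) \<Rightarrow> ('k \<Rightarrow>\<^sub>L 'k) \<Rightarrow> bool" where
  "is_adjoint T S \<longleftrightarrow> (\<forall>x y. inner (T x) y = inner x (S y))"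

definition cstar_gen :: "('k::real_inner \<Rightarrow>\<^sub>L 'k) \<Rightarrow> ('k \<Rightarrow>\<^sub>L 'k) set \<Rightarrow> ('k \<Rightarrow>\<^sub>L 'k) set" where
  "cstar_gen J S = \<Inter>{A. S \<subseteq> A \<and> A \<subseteq> cops J \<and> closed A \<and>
       (\<forall>T\<in>A. \<forall>T'\<in>A. T + T' \<in> A \<and> T o\<^sub>L T' \<in> A) \<and>
       (\<forall>T\<in>A. \<forall>c::real. c *\<^sub>R T \<in> A \<and> J o\<^sub>L T \<in> A) \<and>
       (\<forall>T\<in>A. \<exists>T'\<in>A. is_adjoint T T')}"

definition commutant :: "('k::real_inner \<Rightarrow>\<^sub>L 'k) \<Rightarrow> ('k \<Rightarrow>\<^sub>L 'k) set \<Rightarrow> ('k \<Rightarrow>\<^sub>L 'k) set" where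
  "commutant J S = {T \<in> cops J. \<forall>A\<in>S. T o\<^sub>L A = A o\<^sub>L T}"

definition cyclic_vector :: "('k::real_normed_vector \<Rightarrow>\<^sub>L 'k) set \<Rightarrow> 'k \<Rightarrow> bool" where
  "cyclic_vector A \<xi> \<longleftrightarrow> closure ((\<lambda>T. blinfun_apply T \<xi>) ` A) = UNIV"

text \<open>A representation of CCR(H,\<sigma>c) on the complex Hilbert space (K,J), given by the
  images W v = \<pi>(W(v)) of the Weyl generators; multiplication by i is J.\<close>
definition weyl_rep ::
  "('k::real_inner \<Rightarrow>\<^sub>L 'k) \<Rightarrow> ('h::real_vector \<Rightarrow> 'h \<Rightarrow> real) \<Rightarrow> ('h \<Rightarrow> ('k \<Rightarrow>\<^sub>L 'k)) \<Rightarrow> bool" where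
  "weyl_rep J \<sigma>c W \<longleftrightarrow>
     (\<forall>v. W v \<in> cops J) \<and>
     (\<forall>v1 v2. W v1 o\<^sub>L W v2 =
        cos (\<sigma>c v1 v2 / 2) *\<^sub>R W (v1 + v2) - sin (\<sigma>c v1 v2 / 2) *\<^sub>R (J o\<^sub>L W (v1 + v2))) \<and>
     (\<forall>v. is_adjoint (W v) (W (- v)))"

definition pi_ccr :: "('k::real_inner \<Rightarrow>\<^sub>L 'k) \<Rightarrow> ('h \<Rightarrow> ('k \<Rightarrow>\<^sub>L 'k)) \<Rightarrow> 'h set \<Rightarrow> ('k \<Rightarrow>\<^sub>L 'k) set" where
  "pi_ccr J W Y = cstar_gen J (W ` Y)"

end

(* All three claims are monotone in the subspace generating the Weyl algebra (for the C*-algebra,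
   its double commutant and cyclicity alike), so everything reduces to the inclusion of j(X_bulk)
   in the closure of the range of bdry_dual.

   By the projection theorem it suffices that every u in X^cpl orthogonal to all bdry_dual f is
   orthogonal to j(X_bulk). For such u the defining property of bdry_dual gives
   bd (eta_cpl u restricted to X_bulk) = 0, so eta_cpl u vanishes on X_bulk by the injectivity
   hypothesis, which says exactly that u is orthogonal to j(X_bulk).

   Barreledness is what makes bdry_dual well defined: the eta-unit ball of X is a barrel (closed
   because each eta w is continuous), hence a neighbourhood of 0, so j and every eta_cpl u are
   continuous. Weak-star continuity of bd then turns u |-> bd (eta_cpl u restricted to X_bulk) f into
   a continuous linear functional on X^cpl, which the Riesz representation theorem represents by
   bdry_dual f. *)
theory Submission
  imports Defs
begin

section \<open>Orthogonal projection in real Hilbert spaces\<close>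

lemma subspace_closure:
  fixes S :: "'a::real_normed_vector set"
  assumes "subspace S"
  shows "subspace (closure S)"
  unfolding subspace_def
proof (intro conjI ballI allI)
  show "0 \<in> closure S" using assms closure_subset subspace_0 by blast
next
  fix x y assume "x \<in> closure S" "y \<in> closure S"
  then have "x + y \<in> closure (S + S)" using closure_sum set_plus_intro by blast
  moreover have "S + S \<subseteq> S" using assms by (auto simp: set_plus_def subspace_add)
  ultimately show "x + y \<in> closure S" using closure_mono by blast
next
  fix c :: real and x assume "x \<in> closure S"
  then have "c *\<^sub>R x \<in> closure ((*\<^sub>R) c ` S)"
    using closure_bounded_linear_image_subset[OF bounded_linear_scaleR_right] by blast
  moreover have "(*\<^sub>R) c ` S \<subseteq> S" using assms subspace_scale by blast
  ultimately show "c *\<^sub>R x \<in> closure S" using closure_mono by blast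
qed

lemma zero_if_linear_le_quadratic:
  fixes a b :: real
  assumes "b \<ge> 0" and "\<And>t. 2 * t * a \<le> t\<^sup>2 * b"
  shows "a = 0"
proof (cases "b = 0")
  case True
  then show ?thesis
    using assms(2)[of a] by (simp add: mult.assoc[symmetric] power2_eq_square[symmetric])
next
  case False
  have "2 * (a / b) * a = 2 * (a\<^sup>2 / b)" "(a / b)\<^sup>2 * b = a\<^sup>2 / b"
    using False by (simp_all add: power2_eq_square)
  then have "a\<^sup>2 / b \<le> 0" using assms(2)[of "a / b"] by linarith
  then show ?thesis using assms(1) False
    by (smt (verit) divide_pos_pos power2_less_eq_zero_iff zero_less_power2)
qed

lemma parallelogram_midpoint:
  fixes x a b :: "'a::real_inner"
  shows "(norm (a - b))\<^sup>2 =
    2 * (norm (x - a))\<^sup>2 + 2 * (norm (x - b))\<^sup>2 - 4 * (norm (x - midpoint a b))\<^sup>2"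
  unfolding midpoint_def power2_norm_eq_inner
  by (simp add: inner_commute algebra_simps)

lemma nearest_point_exists:
  fixes M :: "'a::{real_inner,complete_space} set"
  assumes "closed M" "convex M" "M \<noteq> {}"
  shows "\<exists>p\<in>M. \<forall>y\<in>M. norm (x - p) \<le> norm (x - y)"
proof -
  define d where "d = (INF y\<in>M. (norm (x - y))\<^sup>2)"
  have d_le: "d \<le> (norm (x - y))\<^sup>2" if "y \<in> M" for y
    unfolding d_def using that by (intro cINF_lower bdd_belowI2[of _ 0]) auto
  have "\<exists>y\<in>M. (norm (x - y))\<^sup>2 < d + inverse (real (Suc n))" for n
    unfolding d_def using assms(3)
    by (intro cINF_less_iff[THEN iffD1]) (auto intro: bdd_belowI2[of _ 0])
  then obtain m where m_in: "\<And>n. m n \<in> M"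
    and m_near: "\<And>n. (norm (x - m n))\<^sup>2 < d + inverse (real (Suc n))"
    by metis
  have m_close: "(norm (m k - m n))\<^sup>2 \<le> 2 * inverse (real (Suc k)) + 2 * inverse (real (Suc n))"
    for k n
  proof -
    have "midpoint (m k) (m n) \<in> M"
      using assms(2) m_in midpoint_in_closed_segment convex_contains_segment by blast
    then show ?thesis
      using parallelogram_midpoint[of "m k" "m n" x] m_near[of k] m_near[of n] d_le by fastforce
  qed
  have "Cauchy m"
  proof (rule metric_CauchyI)
    fix e :: real assume "e > 0"
    then obtain N where N: "inverse (real (Suc N)) < e\<^sup>2 / 4"
      using reals_Archimedean[of "e\<^sup>2 / 4"] by auto
    have "dist (m k) (m n) < e" if "k \<ge> N" "n \<ge> N" for k n
    proof -
      have "inverse (real (Suc k)) \<le> inverse (real (Suc N))"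
        and "inverse (real (Suc n)) \<le> inverse (real (Suc N))"
        using that by (auto intro: le_imp_inverse_le)
      then have "(norm (m k - m n))\<^sup>2 < e\<^sup>2" using m_close[of k n] N by linarith
      then show ?thesis using \<open>e > 0\<close> by (simp add: dist_norm power_less_imp_less_base)
    qed
    then show "\<exists>N. \<forall>k\<ge>N. \<forall>n\<ge>N. dist (m k) (m n) < e" by blast
  qed
  then obtain p where p: "m \<longlonglongrightarrow> p" using Cauchy_convergent_iff convergent_def by blast
  have "p \<in> M" using closed_sequentially[OF assms(1)] m_in p by blast
  have "(\<lambda>n. (norm (x - m n))\<^sup>2) \<longlonglongrightarrow> (norm (x - p))\<^sup>2" using p by (intro tendsto_intros)
  moreover have "(\<lambda>n. d + inverse (real (Suc n))) \<longlonglongrightarrow> d"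
    using tendsto_add[OF tendsto_const LIMSEQ_inverse_real_of_nat] by simp
  ultimately have "(norm (x - p))\<^sup>2 \<le> d"
    using m_near by (intro LIMSEQ_le) (auto intro: less_imp_le)
  then show ?thesis using \<open>p \<in> M\<close> d_le by (meson order_trans power2_le_imp_le norm_ge_zero)
qed

lemma nearest_point_orthogonal:
  fixes x p :: "'a::real_inner"
  assumes "subspace M" "p \<in> M" "\<forall>z\<in>M. norm (x - p) \<le> norm (x - z)" "y \<in> M"
  shows "inner (x - p) y = 0"
proof (rule zero_if_linear_le_quadratic)
  fix t :: real
  have "p + t *\<^sub>R y \<in> M" using assms subspace_add subspace_scale by blast
  then have "(norm (x - p))\<^sup>2 \<le> (norm ((x - p) - t *\<^sub>R y))\<^sup>2"
    using assms(3) by (simp add: diff_diff_eq)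
  also have "\<dots> = (norm (x - p))\<^sup>2 - 2 * t * inner (x - p) y + t\<^sup>2 * inner y y"
    unfolding power2_norm_eq_inner by (simp add: inner_commute algebra_simps power2_eq_square)
  finally show "2 * t * inner (x - p) y \<le> t\<^sup>2 * inner y y" by simp
qed simp

lemma orthogonal_projection_exists:
  fixes M :: "'a::{real_inner,complete_space} set"
  assumes "closed M" "subspace M"
  shows "\<exists>p\<in>M. \<forall>y\<in>M. inner (x - p) y = 0"
proof -
  have "M \<noteq> {}" using assms(2) subspace_0 by blast
  then obtain p where "p \<in> M" "\<forall>y\<in>M. norm (x - p) \<le> norm (x - y)"
    using nearest_point_exists assms subspace_imp_convex by blast
  then show ?thesis using nearest_point_orthogonal assms(2) by blast
qed

lemma mem_closed_subspace_if_orthogonal: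
  fixes M :: "'a::{real_inner,complete_space} set"
  assumes "closed M" "subspace M" and orth: "\<And>q. \<forall>y\<in>M. inner q y = 0 \<Longrightarrow> inner x q = 0"
  shows "x \<in> M"
proof -
  obtain p where "p \<in> M" and p_orth: "\<forall>y\<in>M. inner (x - p) y = 0"
    using orthogonal_projection_exists assms(1,2) by blast
  have "inner (x - p) (x - p) = inner x (x - p) - inner p (x - p)" by (simp add: inner_diff_left)
  also have "\<dots> = 0" using orth[OF p_orth] p_orth \<open>p \<in> M\<close> by (simp add: inner_commute)
  finally show ?thesis using \<open>p \<in> M\<close> by simp
qed

lemma riesz_representation:
  fixes \<phi> :: "'a::{real_inner,complete_space} \<Rightarrow> real"
  assumes "linear \<phi>" "continuous_on UNIV \<phi>"
  shows "\<exists>p. \<forall>u. inner p u = \<phi> u"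
proof (cases "\<forall>u. \<phi> u = 0")
  case True
  then show ?thesis by (intro exI[of _ 0]) simp
next
  case False
  then obtain z where z: "\<phi> z \<noteq> 0" by blast
  define N where "N = {x. \<phi> x = 0}"
  have "closed N" unfolding N_def using assms(2) by (intro closed_Collect_eq) auto
  moreover have "subspace N" unfolding N_def using assms(1) by (rule real_vector.linear_subspace_kernel)
  ultimately obtain m where "m \<in> N" and m_orth: "\<forall>y\<in>N. inner (z - m) y = 0"
    using orthogonal_projection_exists by blast
  define q where "q = z - m"
  have \<phi>q: "\<phi> q = \<phi> z" using \<open>m \<in> N\<close> assms(1) unfolding q_def N_def by (simp add: linear_diff)
  have q_repr: "inner q u = \<phi> u / \<phi> q * inner q q" for u
  proof -
    have "u - (\<phi> u / \<phi> q) *\<^sub>R q \<in> N" unfolding N_def using assms(1) \<phi>q z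
      by (simp add: linear_diff linear_scale)
    then have "inner q (u - (\<phi> u / \<phi> q) *\<^sub>R q) = 0" using m_orth unfolding q_def by blast
    then show ?thesis by (simp add: inner_diff_right)
  qed
  have "q \<noteq> 0" using \<phi>q z assms(1) linear_0 by force
  then have "inner ((\<phi> q / inner q q) *\<^sub>R q) u = \<phi> u" for u
    using q_repr[of u] \<phi>q z by simp
  then show ?thesis by blast
qed

section \<open>Continuous functionals on barreled spaces\<close>

lemma continuous_map_weak_star_iff:
  "continuous_map X (weak_star D) f \<longleftrightarrow>
     f \<in> topspace X \<rightarrow> D \<and> (\<forall>x. continuous_map X euclideanreal (\<lambda>p. f p x))"
  unfolding weak_star_def continuous_map_in_subtopology continuous_map_componentwise_UNIV by blast

lemma cdual_UNIV_iff: "u \<in> cdual UNIV \<longleftrightarrow> linear u \<and> continuous_on UNIV u"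
proof -
  have "linear u \<longleftrightarrow> (\<forall>x y a b. u (a *\<^sub>R x + b *\<^sub>R y) = a * u x + b * u y)"
  proof
    assume "linear u"
    then show "\<forall>x y a b. u (a *\<^sub>R x + b *\<^sub>R y) = a * u x + b * u y"
      by (simp add: linear_add linear_scale)
  next
    assume lin: "\<forall>x y a b. u (a *\<^sub>R x + b *\<^sub>R y) = a * u x + b * u y"
    show "linear u"
      by (rule linearI)
        (use lin[rule_format, where a=1 and b=1] lin[rule_format, where b=0 and y=0] in auto)
  qed
  then show ?thesis unfolding cdual_def by auto
qed

lemma restr_cdual:
  assumes "u \<in> cdual UNIV" "subspace S"
  shows "restr S u \<in> cdual S"
proof -
  have "linear u" "continuous_on UNIV u" using assms(1) cdual_UNIV_iff by blast+
  have "continuous_on S (restr S u)"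
    using continuous_on_subset[OF \<open>continuous_on UNIV u\<close> subset_UNIV]
    by (rule continuous_on_eq) (simp add: restr_def)
  moreover have "restr S u (a *\<^sub>R x + b *\<^sub>R y) = a * restr S u x + b * restr S u y"
    if "x \<in> S" "y \<in> S" for a b x y
  proof -
    have "a *\<^sub>R x + b *\<^sub>R y \<in> S" using that assms(2) by (simp add: subspace_add subspace_scale)
    then show ?thesis using that \<open>linear u\<close> by (simp add: restr_def linear_add linear_scale)
  qed
  ultimately show ?thesis unfolding cdual_def by (auto simp: restr_def)
qed

lemma tvs_continuous_on_scaled_translate:
  assumes "tvs TYPE('x::{real_vector,topological_space})"
  shows "continuous_on UNIV (\<lambda>y::'x. c *\<^sub>R (y - x))"
proof -
  have add: "continuous_on UNIV (\<lambda>p::'x \<times> 'x. fst p + snd p)"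
    and mult: "continuous_on UNIV (\<lambda>p::real \<times> 'x. fst p *\<^sub>R snd p)"
    using assms unfolding tvs_def by auto
  have "continuous_on UNIV (\<lambda>y::'x. fst (y, - x) + snd (y, - x))"
    by (rule continuous_on_compose2[OF add])
      (auto intro: continuous_on_Pair continuous_on_id continuous_on_const)
  then have "continuous_on UNIV (\<lambda>y::'x. (c, y - x))"
    by (simp add: continuous_on_Pair continuous_on_const)
  then have "continuous_on UNIV (\<lambda>y::'x. fst (c, y - x) *\<^sub>R snd (c, y - x))"
    using continuous_on_compose2[OF mult] by blast
  then show ?thesis by simp
qed

lemma tvs_linear_continuous_if_bounded_near_0:
  fixes j :: "'x::{real_vector,topological_space} \<Rightarrow> 'h::real_normed_vector"
  assumes "tvs TYPE('x)" "linear j" "open U" "0 \<in> U" "\<forall>v\<in>U. norm (j v) \<le> 1"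
  shows "continuous_on UNIV j"
  unfolding continuous_on_topological
proof (intro ballI allI impI)
  fix x and B :: "'h set"
  assume "open B" "j x \<in> B"
  then obtain e where "e > 0" and e: "\<And>z. dist z (j x) < e \<Longrightarrow> z \<in> B"
    unfolding open_dist by blast
  define g where "g y = (2 / e) *\<^sub>R (y - x)" for y
  have "open (g -` U)"
    using continuous_on_open_vimage[of UNIV g] tvs_continuous_on_scaled_translate[OF assms(1)]
      assms(3)
    unfolding g_def by simp
  moreover have "x \<in> g -` U" using assms(4) unfolding g_def by simp
  moreover have "j y \<in> B" if "y \<in> g -` U" for y
  proof -
    have "j (g y) = (2 / e) *\<^sub>R (j y - j x)"
      unfolding g_def using assms(2) by (simp add: linear_scale linear_diff)
    moreover have "norm (j (g y)) \<le> 1" using that assms(5) by blast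
    ultimately have "(2 / e) * norm (j y - j x) \<le> 1" using \<open>e > 0\<close> by simp
    then have "norm (j y - j x) < e" using \<open>e > 0\<close> by (simp add: field_simps)
    then show ?thesis using e by (simp add: dist_norm)
  qed
  ultimately show "\<exists>A. open A \<and> x \<in> A \<and> (\<forall>y\<in>UNIV. y \<in> A \<longrightarrow> j y \<in> B)" by blast
qed

lemma closed_completion_unit_ball:
  assumes "is_completion \<eta> j" "\<And>w. continuous_on UNIV (\<eta> w)"
  shows "closed {v. norm (j v) \<le> 1}"
proof -
  have \<eta>: "\<eta> w v = inner (j w) (j v)" for w v using assms(1) unfolding is_completion_def by blast
  have "norm (j v) \<le> 1 \<longleftrightarrow> (\<forall>w. \<eta> w v \<le> norm (j w))" for v
  proof
    assume "norm (j v) \<le> 1"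
    show "\<forall>w. \<eta> w v \<le> norm (j w)"
    proof
      fix w
      have "\<eta> w v \<le> norm (j w) * norm (j v)" unfolding \<eta> by (rule norm_cauchy_schwarz)
      also have "\<dots> \<le> norm (j w)" using \<open>norm (j v) \<le> 1\<close> by (simp add: mult_left_le)
      finally show "\<eta> w v \<le> norm (j w)" .
    qed
  next
    assume "\<forall>w. \<eta> w v \<le> norm (j w)"
    then have "norm (j v) * norm (j v) \<le> norm (j v)"
      unfolding \<eta> by (metis dot_square_norm power2_eq_square)
    then show "norm (j v) \<le> 1"
      by (cases "norm (j v) = 0") (auto simp: mult_le_cancel_left1)
  qed
  then have "{v. norm (j v) \<le> 1} = (\<Inter>w. {v. \<eta> w v \<le> norm (j w)})" by blast
  moreover have "closed {v. \<eta> w v \<le> norm (j w)}" for w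
    using closed_Collect_le[OF assms(2) continuous_on_const] .
  ultimately show ?thesis by (simp add: closed_INT)
qed

lemma barrel_unit_ball:
  fixes j :: "'x::{real_vector,topological_space} \<Rightarrow> 'h::real_normed_vector"
  assumes "linear j" "closed {v. norm (j v) \<le> 1}"
  shows "barrel {v. norm (j v) \<le> 1}"
  unfolding barrel_def
proof (intro conjI allI ballI impI assms(2))
  have "{v. norm (j v) \<le> 1} = j -` cball 0 1" by auto
  then show "convex {v. norm (j v) \<le> 1}"
    using convex_linear_vimage[OF assms(1) convex_cball] by simp
next
  fix x and c :: real
  assume "x \<in> {v. norm (j v) \<le> 1}" "\<bar>c\<bar> \<le> 1"
  then show "c *\<^sub>R x \<in> {v. norm (j v) \<le> 1}"
    using assms(1) by (simp add: linear_scale mult_le_one)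
next
  fix x
  define r where "r = 1 / (norm (j x) + 1)"
  have "r > 0" unfolding r_def by (simp add: add_nonneg_pos)
  moreover have "c *\<^sub>R x \<in> {v. norm (j v) \<le> 1}" if "\<bar>c\<bar> \<le> r" for c
  proof -
    have "\<bar>c\<bar> * norm (j x) \<le> r * norm (j x)" using that by (simp add: mult_right_mono)
    also have "\<dots> \<le> 1"
      unfolding r_def by (simp add: divide_le_eq) (use norm_ge_zero[of "j x"] in linarith)
    finally show ?thesis using assms(1) by (simp add: linear_scale)
  qed
  ultimately show "\<exists>r>0. \<forall>c::real. \<bar>c\<bar> \<le> r \<longrightarrow> c *\<^sub>R x \<in> {v. norm (j v) \<le> 1}" by blast
qed

lemma barreled_completion_continuous:
  assumes "barreled TYPE('x::{real_vector,topological_space})"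
    and "is_completion \<eta> j" "\<And>w::'x. continuous_on UNIV (\<eta> w)"
  shows "continuous_on UNIV j"
proof -
  have "linear j" using assms(2) unfolding is_completion_def by blast
  then have "barrel {v. norm (j v) \<le> 1}"
    using barrel_unit_ball closed_completion_unit_ball[OF assms(2,3)] by blast
  then obtain U where "open U" "0 \<in> U" "U \<subseteq> {v. norm (j v) \<le> 1}"
    using assms(1) unfolding barreled_def by blast
  then show ?thesis
    using tvs_linear_continuous_if_bounded_near_0 \<open>linear j\<close> assms(1)
    unfolding barreled_def by blast
qed

section \<open>The boundary dual map\<close>

locale boundary_map =
  fixes j :: "'x::{real_vector,topological_space} \<Rightarrow> 'h::{real_inner,complete_space}"
    and Xbulk :: "'x set"
    and bd :: "('x \<Rightarrow> real) \<Rightarrow> ('b::{real_vector,topological_space} \<Rightarrow> real)"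
  assumes j_linear: "linear j"
    and j_continuous: "continuous_on UNIV j"
    and bulk_subspace: "subspace Xbulk"
    and bd_maps: "\<forall>u\<in>cdual Xbulk. bd u \<in> cdual (UNIV::'b set)"
    and bd_linear: "\<forall>u\<in>cdual Xbulk. \<forall>u'\<in>cdual Xbulk. \<forall>a b::real.
                      bd (\<lambda>x. a * u x + b * u' x) = (\<lambda>f. a * bd u f + b * bd u' f)"
    and bd_cont: "continuous_map (weak_star (cdual (UNIV::'x set))) (weak_star (cdual (UNIV::'b set)))
                    (\<lambda>u. bd (restr Xbulk u))"
begin

definition eta_cpl :: "'h \<Rightarrow> 'x \<Rightarrow> real" where
  "eta_cpl u = (\<lambda>v. inner (j v) u)"

lemma eta_cpl_cdual: "eta_cpl u \<in> cdual UNIV"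
  unfolding cdual_UNIV_iff eta_cpl_def
proof
  show "linear (\<lambda>v. inner (j v) u)"
    using linear_compose[OF j_linear bounded_linear.linear[OF bounded_linear_inner_left]]
    by (simp add: o_def)
  show "continuous_on UNIV (\<lambda>v. inner (j v) u)"
    using j_continuous by (intro continuous_intros)
qed

lemma bd_eta_cpl_linear: "linear (\<lambda>u. bd (restr Xbulk (eta_cpl u)) f)"
proof -
  have "restr Xbulk (eta_cpl (a *\<^sub>R u + b *\<^sub>R u'))
      = (\<lambda>x. a * restr Xbulk (eta_cpl u) x + b * restr Xbulk (eta_cpl u') x)" for a b u u'
    by (auto simp: restr_def eta_cpl_def inner_add_right)
  then have "bd (restr Xbulk (eta_cpl (a *\<^sub>R u + b *\<^sub>R u'))) f
      = a * bd (restr Xbulk (eta_cpl u)) f + b * bd (restr Xbulk (eta_cpl u')) f" for a b u u'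
    using bd_linear restr_cdual[OF eta_cpl_cdual bulk_subspace] by simp
  from this[where a=1 and b=1] this[where b=0] show ?thesis by (intro linearI) auto
qed

lemma bd_eta_cpl_continuous: "continuous_on UNIV (\<lambda>u. bd (restr Xbulk (eta_cpl u)) f)"
proof -
  have "continuous_map euclidean (weak_star (cdual UNIV)) eta_cpl"
    using eta_cpl_cdual unfolding continuous_map_weak_star_iff
    by (auto simp: eta_cpl_def intro!: continuous_intros)
  then have "continuous_map euclidean (weak_star (cdual UNIV)) (\<lambda>u. bd (restr Xbulk (eta_cpl u)))"
    using continuous_map_compose[OF _ bd_cont] by (simp add: o_def)
  then show ?thesis unfolding continuous_map_weak_star_iff by simp
qed

lemma inner_bdry_dual: "inner (bdry_dual j Xbulk bd f) u = bd (restr Xbulk (eta_cpl u)) f"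
proof -
  obtain p where p: "\<forall>u. inner p u = bd (restr Xbulk (eta_cpl u)) f"
    using riesz_representation[OF bd_eta_cpl_linear bd_eta_cpl_continuous] by blast
  moreover have "q = p" if "\<forall>u. inner q u = bd (restr Xbulk (eta_cpl u)) f" for q
    using that p vector_eq_rdot by metis
  ultimately have "\<forall>u. inner (THE p. \<forall>u. inner p u = bd (restr Xbulk (eta_cpl u)) f) u
                        = bd (restr Xbulk (eta_cpl u)) f"
    by (rule theI)
  then show ?thesis unfolding bdry_dual_def eta_cpl_def by blast
qed

lemma linear_bdry_dual: "linear (bdry_dual j Xbulk bd)"
proof -
  have "bd (restr Xbulk (eta_cpl u)) \<in> cdual UNIV" for u
    using bd_maps restr_cdual[OF eta_cpl_cdual bulk_subspace] by blast
  then have lin: "linear (bd (restr Xbulk (eta_cpl u)))" for u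
    unfolding cdual_UNIV_iff by blast
  have "inner (bdry_dual j Xbulk bd (a *\<^sub>R f + b *\<^sub>R g)) u
      = inner (a *\<^sub>R bdry_dual j Xbulk bd f + b *\<^sub>R bdry_dual j Xbulk bd g) u" for a b f g u
    unfolding inner_bdry_dual inner_add_left inner_scaleR_left
    unfolding linear_add[OF lin] linear_scale[OF lin] by simp
  then have "bdry_dual j Xbulk bd (a *\<^sub>R f + b *\<^sub>R g)
      = a *\<^sub>R bdry_dual j Xbulk bd f + b *\<^sub>R bdry_dual j Xbulk bd g" for a b f g
    by (subst vector_eq_rdot[symmetric]) (rule allI)
  from this[where a=1 and b=1] this[where b=0] show ?thesis by (intro linearI) auto
qed

lemma bulk_subset_closure_bdry_dual:
  assumes bd_inj: "\<forall>u\<in>cdual (UNIV::'x set).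
                     bd (restr Xbulk u) = (\<lambda>_. 0) \<longrightarrow> (\<forall>x\<in>Xbulk. u x = 0)"
  shows "j ` Xbulk \<subseteq> closure (range (bdry_dual j Xbulk bd))"
proof
  fix y assume "y \<in> j ` Xbulk"
  have "subspace (closure (range (bdry_dual j Xbulk bd)))"
    using linear_bdry_dual by (intro subspace_closure real_vector.linear_subspace_image subspace_UNIV)
  moreover have "inner y q = 0" if "\<forall>z\<in>closure (range (bdry_dual j Xbulk bd)). inner q z = 0" for q
  proof -
    have "inner (bdry_dual j Xbulk bd f) q = 0" for f
      using that closure_subset by (metis inner_commute rangeI subsetD)
    then have "bd (restr Xbulk (eta_cpl q)) f = 0" for f
      unfolding inner_bdry_dual .
    then have "\<forall>x\<in>Xbulk. eta_cpl q x = 0" using bd_inj eta_cpl_cdual by blast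
    then show ?thesis using \<open>y \<in> j ` Xbulk\<close> unfolding eta_cpl_def by blast
  qed
  ultimately show "y \<in> closure (range (bdry_dual j Xbulk bd))"
    using mem_closed_subspace_if_orthogonal[OF closed_closure] by blast
qed

end

lemma pi_ccr_mono: "Y \<subseteq> Y' \<Longrightarrow> pi_ccr J W Y \<subseteq> pi_ccr J W Y'"
  unfolding pi_ccr_def cstar_gen_def by (rule Inter_anti_mono) blast

lemma commutant_antimono: "S \<subseteq> S' \<Longrightarrow> commutant J S' \<subseteq> commutant J S"
  unfolding commutant_def by blast

lemma cyclic_vector_mono: "A \<subseteq> A' \<Longrightarrow> cyclic_vector A \<xi> \<Longrightarrow> cyclic_vector A' \<xi>"
  unfolding cyclic_vector_def by (metis closure_mono image_mono top.extremum_uniqueI)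

theorem corollary2p3:
  fixes \<sigma> \<eta> :: "'x::{real_vector,topological_space} \<Rightarrow> 'x \<Rightarrow> real"
    and Xbulk :: "'x set"
    and bd :: "('x \<Rightarrow> real) \<Rightarrow> ('b::{real_vector,topological_space} \<Rightarrow> real)"
    and j :: "'x \<Rightarrow> 'h::{real_inner,complete_space}"
    and \<sigma>c :: "'h \<Rightarrow> 'h \<Rightarrow> real"
    and J :: "'k::{real_inner,complete_space} \<Rightarrow>\<^sub>L 'k"
    and W :: "'h \<Rightarrow> ('k \<Rightarrow>\<^sub>L 'k)"
  assumes X_barreled: "barreled TYPE('x)"
    and Xbd_tvs: "tvs TYPE('b)"
    and sympl: "symplectic_form \<sigma>"
    and bulk_sub: "subspace Xbulk"
    and bd_maps: "\<forall>u\<in>cdual Xbulk. bd u \<in> cdual (UNIV::'b set)"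
    and bd_linear: "\<forall>u\<in>cdual Xbulk. \<forall>u'\<in>cdual Xbulk. \<forall>a b::real.
                      bd (\<lambda>x. a * u x + b * u' x) = (\<lambda>f. a * bd u f + b * bd u' f)"
    and bd_cont: "continuous_map (weak_star (cdual (UNIV::'x set))) (weak_star (cdual (UNIV::'b set)))
                    (\<lambda>u. bd (restr Xbulk u))"
    and eta_pos: "strictly_pos_sym_form \<eta>"
    and eta_bound: "\<forall>v1 v2. \<bar>\<sigma> v1 v2\<bar> \<le> sqrt (\<eta> v1 v1) * sqrt (\<eta> v2 v2)"
    and eta_cont: "continuous_map euclidean (weak_star (cdual (UNIV::'x set))) (\<lambda>v w. \<eta> w v)"
    and bd_inj: "\<forall>u\<in>cdual (UNIV::'x set). bd (restr Xbulk u) = (\<lambda>_. 0) \<longrightarrow> (\<forall>x\<in>Xbulk. u x = 0)"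
    and compl: "is_completion \<eta> j"
    and sigma_ext: "bounded_bilinear \<sigma>c" "\<forall>v w. \<sigma>c (j v) (j w) = \<sigma> v w"
    and cstr: "complex_structure J"
    and rep: "weyl_rep J \<sigma>c W"
  shows "pi_ccr J W (closure (j ` Xbulk))
           \<subseteq> pi_ccr J W (closure (range (bdry_dual j Xbulk bd)))
       \<and> commutant J (commutant J (pi_ccr J W (closure (j ` Xbulk))))
           \<subseteq> commutant J (commutant J (pi_ccr J W (closure (range (bdry_dual j Xbulk bd)))))
       \<and> (\<forall>\<xi>. cyclic_vector (pi_ccr J W (closure (j ` Xbulk))) \<xi>
              \<longrightarrow> cyclic_vector (pi_ccr J W (closure (range (bdry_dual j Xbulk bd)))) \<xi>)"
proof -
  have "continuous_on UNIV (\<eta> w)" for w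
    using eta_cont unfolding continuous_map_weak_star_iff by auto
  then have "continuous_on UNIV j"
    using barreled_completion_continuous[OF X_barreled compl] by blast
  moreover have "linear j" using compl unfolding is_completion_def by blast
  ultimately interpret boundary_map j Xbulk bd
    using bulk_sub bd_maps bd_linear bd_cont by (intro boundary_map.intro)
  have "closure (j ` Xbulk) \<subseteq> closure (range (bdry_dual j Xbulk bd))"
    using bulk_subset_closure_bdry_dual[OF bd_inj] by (simp add: closure_minimal)
  then have incl: "pi_ccr J W (closure (j ` Xbulk))
                     \<subseteq> pi_ccr J W (closure (range (bdry_dual j Xbulk bd)))"
    by (rule pi_ccr_mono)
  show ?thesis
    using incl commutant_antimono[OF commutant_antimono[OF incl]] cyclic_vector_mono[OF incl] by blast
qed

end
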